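(* Let $\Theta\subset\mathbb{R}^n$ be a nearly convex set and $F:\mathbb{R}^n\rightrightarrows\mathbb{R}^p$, $G:\mathbb{R}^n\rightrightarrows\mathbb{R}^q$ nearly convex set-valued mappings such that $\operatorname{ri}(\operatorname{dom} F)\cap\operatorname{ri}(\operatorname{dom} G)\cap\operatorname{ri}\Theta\neq\emptyset$. Then the set-valued mapping $\Phi:\mathbb{R}^n\times\mathbb{R}^q\rightrightarrows\mathbb{R}^p$ defined by $\Phi(x,y)=F(x)$ if $x\in\Theta$ and $y\in G(x)$, and $\Phi(x,y)=\emptyset$ otherwise, is nearly convex.
   Context: A set $\Omega\subset\mathbb{R}^k$ is nearly convex if there is a convex set $C$ with $C\subset\Omega\subset\overline{C}$. For an arbitrary set $\Omega$, $\operatorname{ri}\Omega=\{a\in\Omega:\exists\delta>0,\ B(a;\delta)\cap\operatorname{aff}\Omega\subset\Omega\}$. For a set-valued mapping $F$: $\operatorname{dom} F=\{x:F(x)\neq\emptyset\}$, $\operatorname{gph} F=\{(x,y):y\in F(x)\}$; $F$ is nearly convex if $\operatorname{gph} F$ is nearly convex. *)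

theory Defs
  imports "HOL-Analysis.Analysis"
begin

definition nearly_convex :: "'a::real_normed_vector set \<Rightarrow> bool" where
  "nearly_convex \<Omega> \<longleftrightarrow> (\<exists>C. convex C \<and> C \<subseteq> \<Omega> \<and> \<Omega> \<subseteq> closure C)"

definition sv_dom :: "('a \<Rightarrow> 'b set) \<Rightarrow> 'a set" where
  "sv_dom F = {x. F x \<noteq> {}}"

definition gph :: "('a \<Rightarrow> 'b set) \<Rightarrow> ('a \<times> 'b) set" where
  "gph F = {(x, y). y \<in> F x}"

definition nearly_convex_map :: "('a::real_normed_vector \<Rightarrow> 'b::real_normed_vector set) \<Rightarrow> bool" where
  "nearly_convex_map F \<longleftrightarrow> nearly_convex (gph F)"

end

theory Submission
  imports Defs
begin

text \<open>The graph of \<open>\<Phi>\<close> is the intersection of three nearly convex sets in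
  \<open>(\<real>\<^sup>n \<times> \<real>\<^sup>q) \<times> \<real>\<^sup>p\<close>: the cylinder over \<open>\<Theta>\<close>, the cylinder over \<open>gph G\<close>, and a
  coordinate permutation of the cylinder over \<open>gph F\<close>. A nearly convex set is squeezed between
  a convex set and its closure and has the same relative interior as that convex set, so near
  convexity is preserved by products and linear images, and two nearly convex sets whose relative
  interiors meet have a nearly convex intersection, since closure commutes with intersection
  for such convex sets. The qualification condition on the domains, lifted along the projection
  \<open>gph F \<rightarrow> dom F\<close>, provides a common relative interior point of the three sets.\<close>

lemma rel_interior_between_closure:
  fixes C \<Omega> :: "'a::euclidean_space set"
  assumes "convex C" "C \<subseteq> \<Omega>" "\<Omega> \<subseteq> closure C"
  shows "rel_interior \<Omega> = rel_interior C"
proof -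
  have "affine hull \<Omega> \<subseteq> affine hull (closure C)" using assms(3) by (rule hull_mono)
  then have affine_hull_eq: "affine hull \<Omega> = affine hull C"
    using hull_mono[OF assms(2), of affine] by simp
  have "rel_interior C \<subseteq> rel_interior \<Omega>"
    using rel_interior_mono[OF assms(2)] affine_hull_eq by simp
  moreover have "rel_interior \<Omega> \<subseteq> rel_interior (closure C)"
    using rel_interior_mono[OF assms(3)] affine_hull_eq by simp
  ultimately show ?thesis using convex_rel_interior_closure[OF assms(1)] by auto
qed

lemma nearly_convexE:
  assumes "nearly_convex \<Omega>"
  obtains C where "convex C" "C \<subseteq> \<Omega>" "\<Omega> \<subseteq> closure C"
  using assms by (auto simp: nearly_convex_def)

lemma nearly_convex_UNIV: "nearly_convex UNIV"
  unfolding nearly_convex_def by (intro exI[of _ UNIV]) simp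

lemma nearly_convex_Times:
  assumes "nearly_convex A" "nearly_convex B"
  shows "nearly_convex (A \<times> B)"
proof -
  obtain CA where CA: "convex CA" "CA \<subseteq> A" "A \<subseteq> closure CA"
    using assms(1) by (rule nearly_convexE)
  obtain CB where CB: "convex CB" "CB \<subseteq> B" "B \<subseteq> closure CB"
    using assms(2) by (rule nearly_convexE)
  show ?thesis unfolding nearly_convex_def
    using CA CB by (intro exI[of _ "CA \<times> CB"]) (auto simp: convex_Times closure_Times)
qed

lemma rel_interior_nearly_convex_Times:
  fixes A :: "'a::euclidean_space set" and B :: "'b::euclidean_space set"
  assumes "nearly_convex A" "nearly_convex B"
  shows "rel_interior (A \<times> B) = rel_interior A \<times> rel_interior B"
proof -
  obtain CA where CA: "convex CA" "CA \<subseteq> A" "A \<subseteq> closure CA"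
    using assms(1) by (rule nearly_convexE)
  obtain CB where CB: "convex CB" "CB \<subseteq> B" "B \<subseteq> closure CB"
    using assms(2) by (rule nearly_convexE)
  have "rel_interior (A \<times> B) = rel_interior (CA \<times> CB)"
  proof (rule rel_interior_between_closure)
    show "convex (CA \<times> CB)" using CA(1) CB(1) by (rule convex_Times)
    show "CA \<times> CB \<subseteq> A \<times> B" using CA(2) CB(2) by (rule Sigma_mono)
    show "A \<times> B \<subseteq> closure (CA \<times> CB)"
      unfolding closure_Times using CA(3) CB(3) by (rule Sigma_mono)
  qed
  then show ?thesis
    using rel_interior_between_closure[OF CA] rel_interior_between_closure[OF CB]
    by (simp add: rel_interior_Times CA(1) CB(1))
qed

lemma nearly_convex_linear_image:
  fixes f :: "'a::euclidean_space \<Rightarrow> 'b::euclidean_space"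
  assumes "linear f" "nearly_convex A"
  shows "nearly_convex (f ` A)"
proof -
  obtain C where "convex C" "C \<subseteq> A" "A \<subseteq> closure C"
    using assms(2) by (rule nearly_convexE)
  then show ?thesis unfolding nearly_convex_def
    using closure_linear_image_subset[OF assms(1), of C]
    by (intro exI[of _ "f ` C"]) (auto simp: convex_linear_image assms(1))
qed

lemma rel_interior_nearly_convex_linear_image:
  fixes f :: "'a::euclidean_space \<Rightarrow> 'b::euclidean_space"
  assumes "linear f" "nearly_convex A"
  shows "rel_interior (f ` A) = f ` rel_interior A"
proof -
  obtain C where C: "convex C" "C \<subseteq> A" "A \<subseteq> closure C"
    using assms(2) by (rule nearly_convexE)
  have "rel_interior (f ` A) = rel_interior (f ` C)"
  proof (rule rel_interior_between_closure)
    show "convex (f ` C)" using assms(1) C(1) by (rule convex_linear_image)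
    show "f ` C \<subseteq> f ` A" using C(2) by (rule image_mono)
    show "f ` A \<subseteq> closure (f ` C)"
      using image_mono[OF C(3)] closure_linear_image_subset[OF assms(1), of C] by (rule order_trans)
  qed
  then show ?thesis
    using rel_interior_between_closure[OF C] rel_interior_convex_linear_image[OF assms(1) C(1)]
    by simp
qed

lemma nearly_convex_Int:
  fixes A B :: "'a::euclidean_space set"
  assumes "nearly_convex A" "nearly_convex B" "rel_interior A \<inter> rel_interior B \<noteq> {}"
  shows "nearly_convex (A \<inter> B)"
    and "rel_interior (A \<inter> B) = rel_interior A \<inter> rel_interior B"
proof -
  obtain CA where CA: "convex CA" "CA \<subseteq> A" "A \<subseteq> closure CA"
    using assms(1) by (rule nearly_convexE)
  obtain CB where CB: "convex CB" "CB \<subseteq> B" "B \<subseteq> closure CB"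
    using assms(2) by (rule nearly_convexE)
  have rel_interior_witnesses:
      "rel_interior A \<inter> rel_interior B = rel_interior CA \<inter> rel_interior CB"
    using rel_interior_between_closure[OF CA] rel_interior_between_closure[OF CB] by simp
  with assms(3) have witnesses_meet: "rel_interior CA \<inter> rel_interior CB \<noteq> {}" by simp
  have convex_witness: "convex (CA \<inter> CB)" using CA(1) CB(1) by (rule convex_Int)
  have squeeze: "CA \<inter> CB \<subseteq> A \<inter> B" "A \<inter> B \<subseteq> closure (CA \<inter> CB)"
    using CA CB closure_Int_convex[OF CA(1) CB(1) witnesses_meet] by auto
  show "nearly_convex (A \<inter> B)"
    unfolding nearly_convex_def using convex_witness squeeze by blast
  show "rel_interior (A \<inter> B) = rel_interior A \<inter> rel_interior B"
    using rel_interior_between_closure[OF convex_witness squeeze] rel_interior_witnesses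
      convex_rel_interior_inter_two[OF CA(1) CB(1) witnesses_meet] by simp
qed

lemma nearly_convex_Int3:
  fixes A B C :: "'a::euclidean_space set"
  assumes "nearly_convex A" "nearly_convex B" "nearly_convex C"
    and "rel_interior A \<inter> rel_interior B \<inter> rel_interior C \<noteq> {}"
  shows "nearly_convex (A \<inter> B \<inter> C)"
  using assms nearly_convex_Int(2)[OF assms(1,2)] by (intro nearly_convex_Int) auto

lemma sv_dom_eq_fst_gph: "sv_dom F = fst ` gph F"
  by (force simp: sv_dom_def gph_def image_iff)

lemma rel_interior_sv_domE:
  fixes F :: "'a::euclidean_space \<Rightarrow> 'b::euclidean_space set"
  assumes "nearly_convex_map F" "x \<in> rel_interior (sv_dom F)"
  obtains y where "(x, y) \<in> rel_interior (gph F)"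
  using assms rel_interior_nearly_convex_linear_image[OF linear_fst, of "gph F"]
  by (force simp: nearly_convex_map_def sv_dom_eq_fst_gph)

theorem theorem4p1:
  fixes \<Theta> :: "'n::euclidean_space set"
    and F :: "'n \<Rightarrow> 'p::euclidean_space set"
    and G :: "'n \<Rightarrow> 'q::euclidean_space set"
  assumes "nearly_convex \<Theta>"
    and "nearly_convex_map F"
    and "nearly_convex_map G"
    and "rel_interior (sv_dom F) \<inter> rel_interior (sv_dom G) \<inter> rel_interior \<Theta> \<noteq> {}"
  shows "nearly_convex_map (\<lambda>(x, y). if x \<in> \<Theta> \<and> y \<in> G x then F x else {})"
proof -
  define swap :: "('n \<times> 'p) \<times> 'q \<Rightarrow> ('n \<times> 'q) \<times> 'p"
    where "swap = (\<lambda>((x, z), y). ((x, y), z))"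
  have "linear swap" unfolding swap_def by (rule linearI) (auto simp: case_prod_beta)
  have gph_F: "nearly_convex (gph F)" and gph_G: "nearly_convex (gph G)"
    using assms(2,3) by (simp_all add: nearly_convex_map_def)
  define A1 :: "(('n \<times> 'q) \<times> 'p) set" where "A1 = (\<Theta> \<times> UNIV) \<times> UNIV"
  define A2 :: "(('n \<times> 'q) \<times> 'p) set" where "A2 = gph G \<times> UNIV"
  define A3 where "A3 = swap ` (gph F \<times> UNIV)"
  obtain x where x: "x \<in> rel_interior (sv_dom F)" "x \<in> rel_interior (sv_dom G)"
    "x \<in> rel_interior \<Theta>"
    using assms(4) by blast
  obtain z where xz: "(x, z) \<in> rel_interior (gph F)"
    using assms(2) x(1) by (rule rel_interior_sv_domE)
  obtain y where xy: "(x, y) \<in> rel_interior (gph G)"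
    using assms(3) x(2) by (rule rel_interior_sv_domE)
  have "((x, y), z) \<in> swap ` (rel_interior (gph F) \<times> UNIV)"
    using xz by (force simp: swap_def)
  then have "((x, y), z) \<in> rel_interior A1 \<inter> rel_interior A2 \<inter> rel_interior A3"
    unfolding A1_def A2_def A3_def using assms(1) x(3) xy gph_F gph_G \<open>linear swap\<close>
    by (simp add: rel_interior_nearly_convex_linear_image rel_interior_nearly_convex_Times
        nearly_convex_Times nearly_convex_UNIV)
  moreover have "nearly_convex A1" "nearly_convex A2" "nearly_convex A3"
    unfolding A1_def A2_def A3_def using assms(1) gph_F gph_G \<open>linear swap\<close>
    by (simp_all add: nearly_convex_linear_image nearly_convex_Times nearly_convex_UNIV)
  ultimately have "nearly_convex (A1 \<inter> A2 \<inter> A3)" by (intro nearly_convex_Int3) blast+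
  moreover have "gph (\<lambda>(x, y). if x \<in> \<Theta> \<and> y \<in> G x then F x else {}) = A1 \<inter> A2 \<inter> A3"
    unfolding A1_def A2_def A3_def gph_def swap_def by (auto simp: image_iff split: if_splits)
  ultimately show ?thesis by (simp add: nearly_convex_map_def)
qed

end
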